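(* In the setting of the context, let $\mu_1,\mu_2$ be nowhere-equal solutions of $$\widehat e_1\cdot\nabla\mu=-C_{31}^{2}-\mu\big(C_{31}^{3}+C_{12}^{2}\big)-\mu^{2}C_{12}^{3}$$ and let $\alpha_1,\alpha_2$ be nowhere-vanishing functions satisfying $\widehat e_1\cdot\nabla\ln|\alpha_i/\Vert v\Vert|=C_{31}^{3}+\mu_iC_{12}^{3}$ for $i=1,2$ (so that $J_i=\alpha_i(\widehat e_2+\mu_i\widehat e_3)$ form a compatible pair of Poisson vector fields for which $\dot x=v(x)$ is locally bi-Hamiltonian). Then $$\nabla\cdot\widehat e_1=\widehat e_1\cdot\nabla\ln\left|\frac{\alpha_1\alpha_2(\mu_2-\mu_1)}{\Vert v\Vert^2}\right|.$$
   Context: Setting: $M$ is an oriented three-dimensional manifold with a Riemannian metric $g$; $\nabla$, $\nabla\cdot$, $\nabla\times$ and $\times$ denote gradient, divergence, curl and cross product. A Poisson vector field is a vector field $J$ with $J\cdot(\nabla\times J)=0$. $v$ is a nowhere vanishing vector field, $\widehat e_1=v/\Vert v\Vert$, extended to a local oriented orthonormal frame $(\widehat e_1,\widehat e_2,\widehat e_3)$ with $\widehat e_3=\widehat e_1\times\widehat e_2$, and structure functions $C_{ij}^k$ defined by $[\widehat e_i,\widehat e_j]=C_{ij}^k\widehat e_k$. *)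

theory Defs
  imports "HOL-Analysis.Analysis"
begin

text \<open>Local coordinate model: a chart U (open subset of R^3, oriented by the
coordinate orientation) of the oriented Riemannian 3-manifold; the metric is
given by its Gram matrix field g.\<close>

definition gmet :: "(real^3 \<Rightarrow> real^3^3) \<Rightarrow> real^3 \<Rightarrow> real^3 \<Rightarrow> real^3 \<Rightarrow> real" where
  "gmet g x a b = a \<bullet> (g x *v b)"

definition gnorm :: "(real^3 \<Rightarrow> real^3^3) \<Rightarrow> real^3 \<Rightarrow> real^3 \<Rightarrow> real" where
  "gnorm g x a = sqrt (gmet g x a a)"

definition riemannian_metric_on :: "(real^3) set \<Rightarrow> (real^3 \<Rightarrow> real^3^3) \<Rightarrow> bool" where
  "riemannian_metric_on U g \<longleftrightarrow> g differentiable_on U \<and>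
     (\<forall>x\<in>U. transpose (g x) = g x \<and> (\<forall>a. a \<noteq> 0 \<longrightarrow> gmet g x a a > 0))"

text \<open>Riemannian cross product: g(a \<times> b, c) = vol_g(a,b,c) = sqrt(det g) det[a b c].\<close>
definition rcross :: "(real^3 \<Rightarrow> real^3^3) \<Rightarrow> real^3 \<Rightarrow> real^3 \<Rightarrow> real^3 \<Rightarrow> real^3" where
  "rcross g x a b = sqrt (det (g x)) *\<^sub>R (matrix_inv (g x) *v cross3 a b)"

definition ddir :: "(real^3 \<Rightarrow> real) \<Rightarrow> (real^3 \<Rightarrow> real^3) \<Rightarrow> real^3 \<Rightarrow> real" where
  "ddir f X x = frechet_derivative f (at x) (X x)"

definition lie :: "(real^3 \<Rightarrow> real^3) \<Rightarrow> (real^3 \<Rightarrow> real^3) \<Rightarrow> real^3 \<Rightarrow> real^3" where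
  "lie X Y x = frechet_derivative Y (at x) (X x) - frechet_derivative X (at x) (Y x)"

definition rdiv :: "(real^3 \<Rightarrow> real^3^3) \<Rightarrow> (real^3 \<Rightarrow> real^3) \<Rightarrow> real^3 \<Rightarrow> real" where
  "rdiv g X x = (1 / sqrt (det (g x))) *
     (\<Sum>i\<in>UNIV. frechet_derivative (\<lambda>y. sqrt (det (g y)) * (X y $ i)) (at x) (axis i 1))"

end

theory Submission
  imports Defs
begin

(*
  In coordinates the Riemannian volume density sqrt (det g) of an oriented orthonormal frame is
  the reciprocal of the Euclidean triple product D = e1 . (e2 x e3).  Hence div e1 is
  D * sum_i d_i (e1^i / D), and the quotient rule turns this into a trace identity whose value
  is expressed through the brackets [e2,e1] and [e3,e1]: div e1 = C_21^2 + C_31^3 = C_31^3 - C_12^2.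
  On the other side, the logarithmic derivative along e1 of alpha1 alpha2 (mu2 - mu1) / |v|^2 is
  the sum of those of alpha_i / |v| and of mu2 - mu1.  Subtracting the two Riccati equations gives
  e1(mu2 - mu1) = -(mu2 - mu1)(C_31^3 + C_12^2 + (mu1 + mu2) C_12^3), and the mu-terms cancel
  against those of the alpha-equations, leaving C_31^3 - C_12^2.
*)

unbundle cross3_syntax
unbundle no set_product_syntax

lemma linear_axis_expansion:
  fixes f :: "real^'n \<Rightarrow> real^'m"
  assumes "linear f"
  shows "f h = (\<Sum>j\<in>UNIV. h $ j *\<^sub>R f (axis j 1))"
proof -
  interpret linear f by fact
  have "f h = f (\<Sum>j\<in>UNIV. h $ j *\<^sub>R axis j 1)"
    using basis_expansion[of h] by (simp add: scalar_mult_eq_scaleR)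
  then show ?thesis by (simp add: sum scale)
qed

lemma sum_trace_triple_derivative:
  fixes D1 D2 D3 :: "real^3 \<Rightarrow> real^3" and e1 e2 e3 :: "real^3"
  assumes "linear D1" "linear D2" "linear D3"
  shows "(\<Sum>i\<in>UNIV. D1 (axis i 1) $ i * (e1 \<bullet> (e2 \<times> e3))
            - e1 $ i * (D1 (axis i 1) \<bullet> (e2 \<times> e3) + e1 \<bullet> (D2 (axis i 1) \<times> e3)
                        + e1 \<bullet> (e2 \<times> D3 (axis i 1))))
       = e1 \<bullet> ((D1 e2 - D2 e1) \<times> e3) + e1 \<bullet> (e2 \<times> (D1 e3 - D3 e1))"
  unfolding linear_axis_expansion[OF assms(1), of e2] linear_axis_expansion[OF assms(1), of e3]
    linear_axis_expansion[OF assms(2), of e1] linear_axis_expansion[OF assms(3), of e1]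
  by (simp add: cross3_simps)

lemma inner_cross_frame_sum:
  fixes e :: "nat \<Rightarrow> real^3" and c :: "nat \<Rightarrow> real"
  shows "(\<Sum>k\<in>{1,2,3}. c k *\<^sub>R e k) \<bullet> (e 2 \<times> e 3) = c 1 * (e 1 \<bullet> (e 2 \<times> e 3))"
    and "e 1 \<bullet> ((\<Sum>k\<in>{1,2,3}. c k *\<^sub>R e k) \<times> e 3) = c 2 * (e 1 \<bullet> (e 2 \<times> e 3))"
    and "e 1 \<bullet> (e 2 \<times> (\<Sum>k\<in>{1,2,3}. c k *\<^sub>R e k)) = c 3 * (e 1 \<bullet> (e 2 \<times> e 3))"
  by (simp_all add: cross3_simps)

lemma matrix_inv_right:
  fixes A :: "real^'n^'n"
  assumes "invertible A"
  shows "A ** matrix_inv A = mat 1"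
proof -
  have "\<exists>A'. A ** A' = mat 1 \<and> A' ** A = mat 1" using assms unfolding invertible_def by blast
  then show ?thesis unfolding matrix_inv_def by (rule someI2_ex) blast
qed

lemma sqrt_det_mult_triple_rcross:
  assumes c: "c = rcross g x a b" and unit: "gmet g x c c = 1"
  shows "sqrt (det (g x)) * (a \<bullet> (b \<times> c)) = 1"
proof -
  define s where "s = sqrt (det (g x))"
  define u where "u = matrix_inv (g x) *v (a \<times> b)"
  have cu: "c = s *\<^sub>R u" using c unfolding rcross_def s_def u_def .
  then have "s \<noteq> 0" using unit by (auto simp: gmet_def)
  then have "invertible (g x)" by (simp add: s_def invertible_det_nz)
  then have "g x *v u = a \<times> b"
    by (simp add: u_def matrix_vector_mul_assoc matrix_inv_right)
  then have "gmet g x c c = s * s * (u \<bullet> (a \<times> b))"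
    by (simp add: gmet_def cu matrix_vector_mult_scaleR)
  moreover have "a \<bullet> (b \<times> c) = s * (u \<bullet> (a \<times> b))"
    by (simp add: cu cross_mult_right) (simp add: cross3_simps)
  ultimately show ?thesis using unit by (simp add: s_def mult.assoc[symmetric])
qed

lemma differentiable_vec_nth:
  assumes "f differentiable F"
  shows "(\<lambda>y. f y $ i) differentiable F"
  using assms bounded_linear.has_derivative[OF bounded_linear_vec_nth]
  unfolding differentiable_def by blast

lemma gnorm_pos:
  assumes "riemannian_metric_on U g" "x \<in> U" "a \<noteq> 0"
  shows "gnorm g x a > 0"
  using assms by (simp add: riemannian_metric_on_def gnorm_def)

lemma gnorm_differentiable_at:
  assumes U: "open U" "x \<in> U" and g: "riemannian_metric_on U g"
    and v: "v differentiable_on U" "v x \<noteq> 0"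
  shows "(\<lambda>y. gnorm g y (v y)) differentiable at x"
proof -
  have "g differentiable at x" "v differentiable at x"
    using U g v differentiable_on_eq_differentiable_at unfolding riemannian_metric_on_def by blast+
  then have "(\<lambda>y. gmet g y (v y) (v y)) differentiable at x"
    unfolding gmet_def inner_vec_def matrix_vector_mult_def
    by (auto intro!: differentiable_sum differentiable_mult differentiable_vec_nth)
  then obtain Q' where Q': "((\<lambda>y. gmet g y (v y) (v y)) has_derivative Q') (at x)"
    unfolding differentiable_def by blast
  have "gmet g x (v x) (v x) > 0"
    using gnorm_pos[OF g U(2) v(2)] by (simp add: gnorm_def)
  then have "((\<lambda>y. sqrt (gmet g y (v y) (v y)))
      has_derivative (\<lambda>t. Q' t * (inverse (sqrt (gmet g x (v x) (v x))) / 2))) (at x)"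
    using Q' by (auto intro!: derivative_eq_intros)
  then show ?thesis
    unfolding gnorm_def differentiable_def by blast
qed

lemma has_derivative_ln_abs:
  fixes h :: "'a::real_normed_vector \<Rightarrow> real"
  assumes "(h has_derivative h') (at x)" "h x \<noteq> 0"
  shows "((\<lambda>y. ln \<bar>h y\<bar>) has_derivative (\<lambda>t. h' t / h x)) (at x)"
proof -
  have ln_abs: "ln \<bar>t\<bar> = ln (t * t) / 2" for t :: real \<comment> \<open>also at t = 0, as ln 0 = 0\<close>
    by (cases "t = 0") (simp_all add: ln_mult abs_if ln_minus)
  have "h x * h x > 0" using assms(2) not_real_square_gt_zero by blast
  then have "((\<lambda>y. ln (h y * h y) / 2) has_derivative (\<lambda>t. h' t / h x)) (at x)"
    using assms by (auto intro!: derivative_eq_intros simp: field_simps)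
  then show ?thesis by (simp add: ln_abs)
qed

lemma ddir_has_derivative: "(f has_derivative f') (at x) \<Longrightarrow> ddir f X x = f' (X x)"
  by (simp add: ddir_def frechet_derivative_at[symmetric])

lemma ddir_ln_abs:
  assumes "h differentiable at x" "h x \<noteq> 0"
  shows "ddir (\<lambda>y. ln \<bar>h y\<bar>) X x = ddir h X x / h x"
  using ddir_has_derivative[OF has_derivative_ln_abs[OF assms(1)[unfolded frechet_derivative_works] assms(2)]]
  by (simp add: ddir_def)

lemma ddir_diff:
  assumes "f differentiable at x" "h differentiable at x"
  shows "ddir (\<lambda>y. f y - h y) X x = ddir f X x - ddir h X x"
  using ddir_has_derivative[OF has_derivative_diff[OF assms[unfolded frechet_derivative_works]]]
  by (simp add: ddir_def)

lemma ddir_ln_abs_mult: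
  assumes "f differentiable at x" "h differentiable at x" "f x \<noteq> 0" "h x \<noteq> 0"
  shows "ddir (\<lambda>y. ln \<bar>f y * h y\<bar>) X x = ddir (\<lambda>y. ln \<bar>f y\<bar>) X x + ddir (\<lambda>y. ln \<bar>h y\<bar>) X x"
proof -
  have "ddir (\<lambda>y. f y * h y) X x = f x * ddir h X x + ddir f X x * h x"
    using ddir_has_derivative[OF has_derivative_mult[OF assms(1,2)[unfolded frechet_derivative_works]]]
    by (simp add: ddir_def)
  then show ?thesis
    using assms by (simp add: ddir_ln_abs differentiable_mult field_simps)
qed

lemma ddir_ln_abs_riccati_diff:
  assumes "\<mu>1 differentiable at x" "\<mu>2 differentiable at x" "\<mu>1 x \<noteq> \<mu>2 x"
    and "ddir \<mu>1 X x = - a - \<mu>1 x * b - (\<mu>1 x)\<^sup>2 * c"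
    and "ddir \<mu>2 X x = - a - \<mu>2 x * b - (\<mu>2 x)\<^sup>2 * c"
  shows "ddir (\<lambda>y. ln \<bar>\<mu>2 y - \<mu>1 y\<bar>) X x = - b - (\<mu>1 x + \<mu>2 x) * c"
proof -
  have "ddir (\<lambda>y. \<mu>2 y - \<mu>1 y) X x = (\<mu>2 x - \<mu>1 x) * (- b - (\<mu>1 x + \<mu>2 x) * c)"
    using assms by (simp add: ddir_diff algebra_simps power2_eq_square)
  then show ?thesis
    using assms by (simp add: ddir_ln_abs differentiable_diff)
qed

lemma ddir_ln_abs_riccati_weight:
  fixes \<alpha>1 \<alpha>2 \<mu>1 \<mu>2 N :: "real^3 \<Rightarrow> real"
  assumes diff: "\<alpha>1 differentiable at x" "\<alpha>2 differentiable at x"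
      "\<mu>1 differentiable at x" "\<mu>2 differentiable at x" "N differentiable at x"
    and nz: "\<alpha>1 x \<noteq> 0" "\<alpha>2 x \<noteq> 0" "N x \<noteq> 0" "\<mu>1 x \<noteq> \<mu>2 x"
    and \<mu>1: "ddir \<mu>1 X x = - a - \<mu>1 x * b - (\<mu>1 x)\<^sup>2 * c"
    and \<mu>2: "ddir \<mu>2 X x = - a - \<mu>2 x * b - (\<mu>2 x)\<^sup>2 * c"
    and \<alpha>1: "ddir (\<lambda>y. ln \<bar>\<alpha>1 y / N y\<bar>) X x = d + \<mu>1 x * c"
    and \<alpha>2: "ddir (\<lambda>y. ln \<bar>\<alpha>2 y / N y\<bar>) X x = d + \<mu>2 x * c"
  shows "ddir (\<lambda>y. ln \<bar>\<alpha>1 y * \<alpha>2 y * (\<mu>2 y - \<mu>1 y) / (N y)\<^sup>2\<bar>) X x = 2 * d - b"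
proof -
  have h1: "(\<lambda>y. \<alpha>1 y / N y) differentiable at x" "\<alpha>1 x / N x \<noteq> 0"
    and h2: "(\<lambda>y. \<alpha>2 y / N y) differentiable at x" "\<alpha>2 x / N x \<noteq> 0"
    and h3: "(\<lambda>y. \<mu>2 y - \<mu>1 y) differentiable at x" "\<mu>2 x - \<mu>1 x \<noteq> 0"
    using diff nz by (auto intro: differentiable_divide)
  have split: "(\<lambda>y. ln \<bar>\<alpha>1 y * \<alpha>2 y * (\<mu>2 y - \<mu>1 y) / (N y)\<^sup>2\<bar>)
      = (\<lambda>y. ln \<bar>\<alpha>1 y / N y * (\<alpha>2 y / N y) * (\<mu>2 y - \<mu>1 y)\<bar>)"
    by (simp add: power2_eq_square)
  have "ddir (\<lambda>y. ln \<bar>\<alpha>1 y / N y * (\<alpha>2 y / N y) * (\<mu>2 y - \<mu>1 y)\<bar>) X x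
      = ddir (\<lambda>y. ln \<bar>\<alpha>1 y / N y * (\<alpha>2 y / N y)\<bar>) X x + ddir (\<lambda>y. ln \<bar>\<mu>2 y - \<mu>1 y\<bar>) X x"
    using h1(2) h2(2) by (intro ddir_ln_abs_mult differentiable_mult h1(1) h2(1) h3) simp
  also have "ddir (\<lambda>y. ln \<bar>\<alpha>1 y / N y * (\<alpha>2 y / N y)\<bar>) X x
      = ddir (\<lambda>y. ln \<bar>\<alpha>1 y / N y\<bar>) X x + ddir (\<lambda>y. ln \<bar>\<alpha>2 y / N y\<bar>) X x"
    by (rule ddir_ln_abs_mult[OF h1(1) h2(1) h1(2) h2(2)])
  also have "ddir (\<lambda>y. ln \<bar>\<mu>2 y - \<mu>1 y\<bar>) X x = - b - (\<mu>1 x + \<mu>2 x) * c"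
    by (rule ddir_ln_abs_riccati_diff[OF diff(3,4) nz(4) \<mu>1 \<mu>2])
  finally show ?thesis
    unfolding split \<alpha>1 \<alpha>2 by (simp add: algebra_simps)
qed

lemma lie_antisym: "lie X Y x = - lie Y X x"
  by (simp add: lie_def)

lemma rdiv_mult_triple_eq_lie:
  fixes E1 E2 E3 :: "real^3 \<Rightarrow> real^3"
  assumes U: "open U" "x \<in> U"
    and diff: "E1 differentiable_on U" "E2 differentiable_on U" "E3 differentiable_on U"
    and vol: "\<forall>y\<in>U. sqrt (det (g y)) * (E1 y \<bullet> (E2 y \<times> E3 y)) = 1"
  shows "rdiv g E1 x * (E1 x \<bullet> (E2 x \<times> E3 x))
         = E1 x \<bullet> (lie E2 E1 x \<times> E3 x) + E1 x \<bullet> (E2 x \<times> lie E3 E1 x)"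
proof -
  define D where "D y = E1 y \<bullet> (E2 y \<times> E3 y)" for y
  define d1 where "d1 = frechet_derivative E1 (at x)"
  define d2 where "d2 = frechet_derivative E2 (at x)"
  define d3 where "d3 = frechet_derivative E3 (at x)"
  define dD where "dD t = d1 t \<bullet> (E2 x \<times> E3 x) + E1 x \<bullet> (d2 t \<times> E3 x) + E1 x \<bullet> (E2 x \<times> d3 t)" for t
  have hd1: "(E1 has_derivative d1) (at x)" and hd2: "(E2 has_derivative d2) (at x)"
    and hd3: "(E3 has_derivative d3) (at x)"
    using diff U unfolding d1_def d2_def d3_def
    by (metis differentiable_on_eq_differentiable_at frechet_derivative_works)+
  have cross: "bounded_bilinear cross3"
    using bilinear_cross bilinear_conv_bounded_bilinear by blast
  have hD: "(D has_derivative dD) (at x)"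
    unfolding D_def[abs_def] dD_def[abs_def]
    using has_derivative_inner[OF hd1 bounded_bilinear.FDERIV[OF cross hd2 hd3]]
    by (rule has_derivative_eq_rhs) (simp add: fun_eq_iff cross_add_right inner_add_right algebra_simps)
  have vol_inv: "sqrt (det (g y)) = 1 / D y" if "y \<in> U" for y
    using vol that unfolding D_def by (auto simp: eq_divide_eq)
  have Dx: "D x \<noteq> 0" using vol U(2) unfolding D_def by force
  \<comment> \<open>Since sqrt (det g) = 1 / D, the quotient rule gives every summand of the divergence.\<close>
  have "((\<lambda>y. sqrt (det (g y)) * (E1 y $ i))
      has_derivative (\<lambda>t. (d1 t $ i * D x - E1 x $ i * dD t) / (D x * D x))) (at x)" for i
  proof (rule has_derivative_transform_within_open[OF _ U])
    show "((\<lambda>y. E1 y $ i / D y)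
        has_derivative (\<lambda>t. (d1 t $ i * D x - E1 x $ i * dD t) / (D x * D x))) (at x)"
      using has_derivative_divide'[OF bounded_linear.has_derivative[OF bounded_linear_vec_nth hd1] hD Dx] .
    show "E1 y $ i / D y = sqrt (det (g y)) * (E1 y $ i)" if "y \<in> U" for y
      using vol_inv that by simp
  qed
  then have "frechet_derivative (\<lambda>y. sqrt (det (g y)) * (E1 y $ i)) (at x)
      = (\<lambda>t. (d1 t $ i * D x - E1 x $ i * dD t) / (D x * D x))" for i
    by (rule frechet_derivative_at[symmetric])
  then have "rdiv g E1 x * D x
      = D x * (\<Sum>i\<in>UNIV. (d1 (axis i 1) $ i * D x - E1 x $ i * dD (axis i 1)) / (D x * D x)) * D x"
    using vol_inv U(2) by (simp add: rdiv_def)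
  also have "\<dots> = (\<Sum>i\<in>UNIV. d1 (axis i 1) $ i * D x - E1 x $ i * dD (axis i 1))"
    using Dx by (simp add: sum_divide_distrib[symmetric])
  also have "\<dots> = E1 x \<bullet> ((d1 (E2 x) - d2 (E1 x)) \<times> E3 x) + E1 x \<bullet> (E2 x \<times> (d1 (E3 x) - d3 (E1 x)))"
    unfolding D_def dD_def
    using hd1 hd2 hd3 by (intro sum_trace_triple_derivative has_derivative_linear)
  finally show ?thesis
    unfolding D_def lie_def d1_def d2_def d3_def .
qed

lemma structure_consts_antisym:
  fixes E :: "nat \<Rightarrow> real^3 \<Rightarrow> real^3" and C :: "nat \<Rightarrow> nat \<Rightarrow> nat \<Rightarrow> real"
  assumes frame: "E 1 x \<bullet> (E 2 x \<times> E 3 x) \<noteq> 0"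
    and Cij: "lie (E i) (E j) x = (\<Sum>k\<in>{1,2,3}. C i j k *\<^sub>R E k x)"
    and Cji: "lie (E j) (E i) x = (\<Sum>k\<in>{1,2,3}. C j i k *\<^sub>R E k x)"
    and k: "k \<in> {1,2,3}"
  shows "C i j k = - C j i k"
proof -
  have "(\<Sum>k\<in>{1,2,3}. C i j k *\<^sub>R E k x) = (\<Sum>k\<in>{1,2,3}. (- C j i k) *\<^sub>R E k x)"
    using Cij Cji lie_antisym[of "E i" "E j" x] by (simp add: sum_negf)
  then have "C i j k * (E 1 x \<bullet> (E 2 x \<times> E 3 x)) = - C j i k * (E 1 x \<bullet> (E 2 x \<times> E 3 x))"
    using k inner_cross_frame_sum[where c = "C i j" and e = "\<lambda>k. E k x"]
      inner_cross_frame_sum[where c = "\<lambda>k. - C j i k" and e = "\<lambda>k. E k x"]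
    by auto
  then show ?thesis using frame mult_right_cancel by blast
qed

lemma rdiv_frame_eq_structure_consts:
  fixes E :: "nat \<Rightarrow> real^3 \<Rightarrow> real^3" and C :: "nat \<Rightarrow> nat \<Rightarrow> nat \<Rightarrow> real"
  assumes U: "open U" "x \<in> U" and diff: "\<forall>i\<in>{1,2,3}. E i differentiable_on U"
    and vol: "\<forall>y\<in>U. sqrt (det (g y)) * (E 1 y \<bullet> (E 2 y \<times> E 3 y)) = 1"
    and C21: "lie (E 2) (E 1) x = (\<Sum>k\<in>{1,2,3}. C 2 1 k *\<^sub>R E k x)"
    and C31: "lie (E 3) (E 1) x = (\<Sum>k\<in>{1,2,3}. C 3 1 k *\<^sub>R E k x)"
  shows "rdiv g (E 1) x = C 2 1 2 + C 3 1 3"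
proof -
  have "rdiv g (E 1) x * (E 1 x \<bullet> (E 2 x \<times> E 3 x)) = (C 2 1 2 + C 3 1 3) * (E 1 x \<bullet> (E 2 x \<times> E 3 x))"
    using rdiv_mult_triple_eq_lie[OF U _ _ _ vol] diff
    unfolding C21 C31 inner_cross_frame_sum[where e = "\<lambda>k. E k x"] by (simp add: distrib_right)
  moreover have "E 1 x \<bullet> (E 2 x \<times> E 3 x) \<noteq> 0" using vol U(2) by force
  ultimately show ?thesis by simp
qed

theorem lemma1:
  fixes U :: "(real^3) set" and g :: "real^3 \<Rightarrow> real^3^3"
    and v :: "real^3 \<Rightarrow> real^3" and E :: "nat \<Rightarrow> real^3 \<Rightarrow> real^3"
    and C :: "nat \<Rightarrow> nat \<Rightarrow> nat \<Rightarrow> real^3 \<Rightarrow> real"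
    and \<mu>1 \<mu>2 \<alpha>1 \<alpha>2 :: "real^3 \<Rightarrow> real"
  assumes U_open: "open U"
    and metric: "riemannian_metric_on U g"
    and v_diff: "v differentiable_on U" and v_nz: "\<forall>x\<in>U. v x \<noteq> 0"
    and E_diff: "\<forall>i\<in>{1,2,3}. E i differentiable_on U"
    and E1: "\<forall>x\<in>U. E 1 x = (1 / gnorm g x (v x)) *\<^sub>R v x"
    and E_orth: "\<forall>x\<in>U. \<forall>i\<in>{1,2,3}. \<forall>j\<in>{1,2,3}.
                   gmet g x (E i x) (E j x) = (if i = j then 1 else 0)"
    and E3: "\<forall>x\<in>U. E 3 x = rcross g x (E 1 x) (E 2 x)"
    and C_def: "\<forall>x\<in>U. \<forall>i\<in>{1,2,3}. \<forall>j\<in>{1,2,3}.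
                  lie (E i) (E j) x = (\<Sum>k\<in>{1,2,3}. C i j k x *\<^sub>R E k x)"
    and \<mu>_diff: "\<mu>1 differentiable_on U" "\<mu>2 differentiable_on U"
    and \<mu>1_eq: "\<forall>x\<in>U. ddir \<mu>1 (E 1) x
                 = - C 3 1 2 x - \<mu>1 x * (C 3 1 3 x + C 1 2 2 x) - (\<mu>1 x)\<^sup>2 * C 1 2 3 x"
    and \<mu>2_eq: "\<forall>x\<in>U. ddir \<mu>2 (E 1) x
                 = - C 3 1 2 x - \<mu>2 x * (C 3 1 3 x + C 1 2 2 x) - (\<mu>2 x)\<^sup>2 * C 1 2 3 x"
    and \<mu>_ne: "\<forall>x\<in>U. \<mu>1 x \<noteq> \<mu>2 x"
    and \<alpha>_diff: "\<alpha>1 differentiable_on U" "\<alpha>2 differentiable_on U"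
    and \<alpha>_nz: "\<forall>x\<in>U. \<alpha>1 x \<noteq> 0" "\<forall>x\<in>U. \<alpha>2 x \<noteq> 0"
    and \<alpha>1_eq: "\<forall>x\<in>U. ddir (\<lambda>y. ln \<bar>\<alpha>1 y / gnorm g y (v y)\<bar>) (E 1) x
                 = C 3 1 3 x + \<mu>1 x * C 1 2 3 x"
    and \<alpha>2_eq: "\<forall>x\<in>U. ddir (\<lambda>y. ln \<bar>\<alpha>2 y / gnorm g y (v y)\<bar>) (E 1) x
                 = C 3 1 3 x + \<mu>2 x * C 1 2 3 x"
  shows "\<forall>x\<in>U. rdiv g (E 1) x
           = ddir (\<lambda>y. ln \<bar>\<alpha>1 y * \<alpha>2 y * (\<mu>2 y - \<mu>1 y) / (gnorm g y (v y))\<^sup>2\<bar>) (E 1) x"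
proof
  fix x assume x: "x \<in> U"
  have vol: "\<forall>y\<in>U. sqrt (det (g y)) * (E 1 y \<bullet> (E 2 y \<times> E 3 y)) = 1"
    using sqrt_det_mult_triple_rcross E3 E_orth by simp
  have frame: "E 1 x \<bullet> (E 2 x \<times> E 3 x) \<noteq> 0" using vol x by force
  have div: "rdiv g (E 1) x = C 2 1 2 x + C 3 1 3 x"
    using rdiv_frame_eq_structure_consts[OF U_open x E_diff vol] C_def x by simp
  have "lie (E 1) (E 2) x = (\<Sum>k\<in>{1,2,3}. C 1 2 k x *\<^sub>R E k x)"
    and "lie (E 2) (E 1) x = (\<Sum>k\<in>{1,2,3}. C 2 1 k x *\<^sub>R E k x)"
    using C_def x by auto
  from structure_consts_antisym[where C = "\<lambda>i j k. C i j k x", OF frame this]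
  have C122: "C 1 2 2 x = - C 2 1 2 x" by simp
  have "(\<lambda>y. gnorm g y (v y)) differentiable at x" "gnorm g x (v x) \<noteq> 0"
    using gnorm_differentiable_at[OF U_open x metric v_diff] gnorm_pos[OF metric x, of "v x"] v_nz x
    by auto
  moreover have "\<alpha>1 differentiable at x" "\<alpha>2 differentiable at x"
      "\<mu>1 differentiable at x" "\<mu>2 differentiable at x"
    using differentiable_on_eq_differentiable_at U_open x \<alpha>_diff \<mu>_diff by blast+
  ultimately have "ddir (\<lambda>y. ln \<bar>\<alpha>1 y * \<alpha>2 y * (\<mu>2 y - \<mu>1 y) / (gnorm g y (v y))\<^sup>2\<bar>) (E 1) x
      = 2 * C 3 1 3 x - (C 3 1 3 x + C 1 2 2 x)"
    using x \<alpha>_nz \<mu>_ne \<mu>1_eq \<mu>2_eq \<alpha>1_eq \<alpha>2_eq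
    by (intro ddir_ln_abs_riccati_weight) auto
  then show "rdiv g (E 1) x
      = ddir (\<lambda>y. ln \<bar>\<alpha>1 y * \<alpha>2 y * (\<mu>2 y - \<mu>1 y) / (gnorm g y (v y))\<^sup>2\<bar>) (E 1) x"
    using div C122 by simp
qed

end
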